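(* Let $R$ be a finite commutative ring with identity. Then $$\chi\big(\mathrm{Reg}(\Gamma(R))\big)\le |J(R)|\,\chi\big(\mathrm{Reg}(\Gamma(R/J(R)))\big).$$ Moreover, if $2\notin Z(R)$, then $\chi\big(\mathrm{Reg}(\Gamma(R))\big)=\chi\big(\mathrm{Reg}(\Gamma(R/J(R)))\big)$.
   Context: For a commutative ring $S$, $Z(S)$ is the set of zero-divisors (including $0$), $\mathrm{Reg}(S)=S\setminus Z(S)$, and $J(S)$ is the Jacobson radical. The total graph $T(\Gamma(S))$ is the simple graph with vertex set $S$ in which distinct $x,y$ are adjacent iff $x+y\in Z(S)$; $\mathrm{Reg}(\Gamma(S))$ is its induced subgraph on $\mathrm{Reg}(S)$. $\chi$ denotes chromatic number. *)

theory Defs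
  imports "HOL-Algebra.QuotRing"
begin

definition zero_divs :: "('a, 'b) ring_scheme \<Rightarrow> 'a set" where
  "zero_divs S = {\<zero>\<^bsub>S\<^esub>} \<union>
     {a \<in> carrier S. \<exists>b \<in> carrier S. b \<noteq> \<zero>\<^bsub>S\<^esub> \<and> a \<otimes>\<^bsub>S\<^esub> b = \<zero>\<^bsub>S\<^esub>}"

definition regular_elems :: "('a, 'b) ring_scheme \<Rightarrow> 'a set" where
  "regular_elems S = carrier S - zero_divs S"

definition jacobson :: "('a, 'b) ring_scheme \<Rightarrow> 'a set" where
  "jacobson S = carrier S \<inter> \<Inter> {I. maximalideal I S}"

text \<open>Adjacency in the total graph T(Gamma(S)).\<close>
definition total_adj :: "('a, 'b) ring_scheme \<Rightarrow> 'a \<Rightarrow> 'a \<Rightarrow> bool" where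
  "total_adj S x y \<longleftrightarrow> x \<noteq> y \<and> x \<oplus>\<^bsub>S\<^esub> y \<in> zero_divs S"

definition chromatic_number :: "'a set \<Rightarrow> ('a \<Rightarrow> 'a \<Rightarrow> bool) \<Rightarrow> nat" where
  "chromatic_number V E = (LEAST k. \<exists>c :: 'a \<Rightarrow> nat.
      (\<forall>x\<in>V. c x < k) \<and> (\<forall>x\<in>V. \<forall>y\<in>V. E x y \<longrightarrow> c x \<noteq> c y))"

definition chi_reg :: "('a, 'b) ring_scheme \<Rightarrow> nat" where
  "chi_reg S = chromatic_number (regular_elems S) (total_adj S)"

end

theory Submission
  imports Defs
begin

text \<open>In a finite commutative ring the regular elements are exactly the units, and
  \<open>1 + J(R)\<close> consists of units, so \<open>x\<close> is regular iff \<open>x + J(R)\<close> is regular in \<open>R/J(R)\<close>.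
  Hence two regular elements in different cosets of \<open>J(R)\<close> are adjacent iff their cosets are.
  Colouring \<open>x\<close> by the pair (colour of \<open>x + J(R)\<close>, position of \<open>x\<close> inside its coset) gives
  the upper bound; a choice of representatives embeds \<open>Reg(\<Gamma>(R/J(R)))\<close> into \<open>Reg(\<Gamma>(R))\<close>.
  If \<open>2\<close> is regular and \<open>x \<equiv> y\<close> then \<open>x + y \<equiv> 2x\<close> is regular, so each coset is independent
  and the colouring of the quotient pulls back along \<open>x \<mapsto> x + J(R)\<close>.\<close>

lemma chromatic_number_le:
  assumes "\<forall>x\<in>V. c x < k" and "\<forall>x\<in>V. \<forall>y\<in>V. E x y \<longrightarrow> c x \<noteq> c y"
  shows "chromatic_number V E \<le> k"
  unfolding chromatic_number_def by (rule Least_le) (use assms in blast)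

lemma optimal_coloring_exists:
  assumes "finite V" and "\<And>x. x \<in> V \<Longrightarrow> \<not> E x x"
  obtains c where "\<forall>x\<in>V. c x < chromatic_number V E"
    and "\<forall>x\<in>V. \<forall>y\<in>V. E x y \<longrightarrow> c x \<noteq> c y"
proof -
  obtain f where f: "bij_betw f V {0..<card V}"
    using ex_bij_betw_finite_nat[OF assms(1)] by blast
  have "(\<forall>x\<in>V. f x < card V) \<and> (\<forall>x\<in>V. \<forall>y\<in>V. E x y \<longrightarrow> f x \<noteq> f y)"
    using f assms(2) by (metis atLeastLessThan_iff bij_betwE bij_betw_imp_inj_on inj_on_eq_iff)
  then have "\<exists>c. (\<forall>x\<in>V. c x < chromatic_number V E) \<and> (\<forall>x\<in>V. \<forall>y\<in>V. E x y \<longrightarrow> c x \<noteq> c y)"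
    unfolding chromatic_number_def by - (rule LeastI_ex, blast)
  then show ?thesis using that by blast
qed

lemma chromatic_number_le_hom:
  assumes "finite W" and "\<And>w. w \<in> W \<Longrightarrow> \<not> E' w w" and "f ` V \<subseteq> W"
    and "\<And>x y. x \<in> V \<Longrightarrow> y \<in> V \<Longrightarrow> E x y \<Longrightarrow> E' (f x) (f y)"
  shows "chromatic_number V E \<le> chromatic_number W E'"
proof -
  obtain c where "\<forall>w\<in>W. c w < chromatic_number W E'"
    and "\<forall>v\<in>W. \<forall>w\<in>W. E' v w \<longrightarrow> c v \<noteq> c w"
    using optimal_coloring_exists[of W E'] assms(1,2) by blast
  then show ?thesis
    using assms(3,4) by (intro chromatic_number_le[where c = "c \<circ> f"]) (force simp: image_subset_iff)+
qed

lemma chromatic_number_le_of_lift: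
  assumes "finite V" and "\<And>x. x \<in> V \<Longrightarrow> \<not> E x x" and "f ` V = W"
    and "\<And>x y. x \<in> V \<Longrightarrow> y \<in> V \<Longrightarrow> E' (f x) (f y) \<Longrightarrow> E x y"
  shows "chromatic_number W E' \<le> chromatic_number V E"
proof (rule chromatic_number_le_hom[where f = "inv_into V f"])
  show "inv_into V f ` W \<subseteq> V"
    using assms(3) by (auto intro: inv_into_into)
  show "E (inv_into V f v) (inv_into V f w)" if "v \<in> W" "w \<in> W" "E' v w" for v w
    using that assms(3,4) by (metis f_inv_into_f inv_into_into)
qed (use assms(1,2) in auto)

lemma chromatic_number_le_mult_fibre_card:
  assumes "finite V" and "finite W" and "\<And>x. x \<in> V \<Longrightarrow> \<not> E x x"
    and "\<And>w. w \<in> W \<Longrightarrow> \<not> E' w w" and "f ` V \<subseteq> W"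
    and fibres: "\<And>w. card {x \<in> V. f x = w} \<le> n"
    and "\<And>x y. x \<in> V \<Longrightarrow> y \<in> V \<Longrightarrow> E x y \<Longrightarrow> f x \<noteq> f y \<Longrightarrow> E' (f x) (f y)"
  shows "chromatic_number V E \<le> n * chromatic_number W E'"
proof -
  let ?k = "chromatic_number W E'"
  obtain c where c: "\<forall>w\<in>W. c w < ?k" "\<forall>v\<in>W. \<forall>w\<in>W. E' v w \<longrightarrow> c v \<noteq> c w"
    using optimal_coloring_exists[of W E'] assms(2,4) by blast
  have "\<forall>w. \<exists>b. bij_betw b {x \<in> V. f x = w} {0..<card {x \<in> V. f x = w}}"
    using assms(1) by (simp add: ex_bij_betw_finite_nat)
  then obtain b where b: "\<And>w. bij_betw (b w) {x \<in> V. f x = w} {0..<card {x \<in> V. f x = w}}"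
    by metis
  define i where "i x = b (f x) x" for x
  \<comment> \<open>\<open>i\<close> numbers the elements of each fibre of \<open>f\<close>; \<open>x\<close> gets the colour \<open>(c (f x), i x)\<close>.\<close>
  have i_lt: "i x < n" if "x \<in> V" for x
    using bij_betwE[OF b] fibres[of "f x"] that unfolding i_def by fastforce
  have i_inj: "x = y" if "x \<in> V" "y \<in> V" "f x = f y" "i x = i y" for x y
    using bij_betw_imp_inj_on[OF b[of "f x"]] that unfolding i_def by (auto dest: inj_onD)
  show ?thesis
  proof (rule chromatic_number_le[where c = "\<lambda>x. c (f x) * n + i x"])
    show "\<forall>x\<in>V. c (f x) * n + i x < n * ?k"
    proof
      fix x assume x: "x \<in> V"
      have "c (f x) * n + i x < Suc (c (f x)) * n" using i_lt[OF x] by simp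
      also have "\<dots> \<le> ?k * n" using c(1) x assms(5) by (intro mult_le_mono1) (simp add: Suc_le_eq image_subset_iff)
      finally show "c (f x) * n + i x < n * ?k" by (simp add: mult.commute)
    qed
    show "\<forall>x\<in>V. \<forall>y\<in>V. E x y \<longrightarrow> c (f x) * n + i x \<noteq> c (f y) * n + i y"
    proof (intro ballI impI notI)
      fix x y assume x: "x \<in> V" and y: "y \<in> V" and "E x y"
        and col: "c (f x) * n + i x = c (f y) * n + i y"
      have "(c (f x) * n + i x) div n = c (f x)" "(c (f y) * n + i y) div n = c (f y)"
        "(c (f x) * n + i x) mod n = i x" "(c (f y) * n + i y) mod n = i y"
        using i_lt[OF x] i_lt[OF y] by simp_all
      then have "c (f x) = c (f y)" and "i x = i y" using col by metis+
      show False
      proof (cases "f x = f y")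
        case True
        then show False using i_inj x y \<open>i x = i y\<close> \<open>E x y\<close> assms(3) by metis
      next
        case False
        then show False
          using assms(5,7) c(2) x y \<open>E x y\<close> \<open>c (f x) = c (f y)\<close> by blast
      qed
    qed
  qed
qed

lemma (in comm_monoid) UnitsI_r_inv:
  assumes "a \<in> carrier G" and "b \<in> carrier G" and "a \<otimes> b = \<one>"
  shows "a \<in> Units G"
  using assms unfolding Units_def by (auto simp: m_comm intro!: bexI[of _ b])

lemma (in cring) Units_not_zero_divs:
  assumes "\<one> \<noteq> \<zero>" and "a \<in> Units R"
  shows "a \<notin> zero_divs R"
proof -
  have "b = \<zero>" if "b \<in> carrier R" "a \<otimes> b = \<zero>" for b
  proof -
    have "b = inv a \<otimes> (a \<otimes> b)" using assms(2) that(1) by (simp add: m_assoc[symmetric] Units_closed)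
    then show ?thesis using assms(2) that by simp
  qed
  moreover have "a \<noteq> \<zero>" using assms by (metis Units_r_inv l_null Units_inv_closed Units_closed)
  ultimately show ?thesis unfolding zero_divs_def by auto
qed

lemma (in cring) not_zero_divs_imp_Units:
  assumes "finite (carrier R)" and a: "a \<in> carrier R" and "a \<notin> zero_divs R"
  shows "a \<in> Units R"
proof -
  have cancel: "b = \<zero>" if "b \<in> carrier R" "a \<otimes> b = \<zero>" for b
    using assms(3) a that unfolding zero_divs_def by auto
  have "inj_on (\<lambda>b. a \<otimes> b) (carrier R)"
  proof (rule inj_onI)
    fix x y assume x: "x \<in> carrier R" and y: "y \<in> carrier R" and "a \<otimes> x = a \<otimes> y"
    then have "a \<otimes> (x \<ominus> y) = \<zero>" using a by (simp add: r_minus minus_eq r_distr r_neg)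
    then have "x \<ominus> y = \<zero>" using cancel x y by simp
    then show "x = y" using x y by (simp add: add.inv_solve_right' minus_eq)
  qed
  then have "(\<lambda>b. a \<otimes> b) ` carrier R = carrier R"
    using assms(1) a by (intro endo_inj_surj) auto
  then obtain b where "b \<in> carrier R" "a \<otimes> b = \<one>" by (metis image_iff one_closed)
  then show ?thesis using a by (blast intro: UnitsI_r_inv)
qed

lemma (in ring_hom_ring) hom_Units:
  assumes "x \<in> Units R"
  shows "h x \<in> Units S"
proof -
  have x: "x \<in> carrier R" "inv\<^bsub>R\<^esub> x \<in> carrier R" using assms by (simp_all add: R.Units_closed)
  have "h (inv\<^bsub>R\<^esub> x) \<otimes>\<^bsub>S\<^esub> h x = \<one>\<^bsub>S\<^esub>"
    using assms x hom_mult[OF x(2,1)] by simp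
  moreover have "h x \<otimes>\<^bsub>S\<^esub> h (inv\<^bsub>R\<^esub> x) = \<one>\<^bsub>S\<^esub>"
    using assms x hom_mult[OF x] by simp
  ultimately show ?thesis
    using x unfolding Units_def by (blast intro: hom_closed)
qed

lemma (in ring) finite_ex_maximalideal_superset:
  assumes "finite (carrier R)" and "ideal I R" and "I \<noteq> carrier R"
  obtains M where "maximalideal M R" and "I \<subseteq> M"
proof -
  define S where "S = {K. ideal K R \<and> I \<subseteq> K \<and> K \<noteq> carrier R}"
  have "S \<subseteq> Pow (carrier R)" unfolding S_def by (auto dest: ideal.Icarr)
  then have "finite S" using assms(1) by (simp add: finite_subset)
  moreover have "I \<in> S" using assms unfolding S_def by simp
  ultimately obtain M where M: "M \<in> S" and M_max: "\<And>K. K \<in> S \<Longrightarrow> M \<subseteq> K \<Longrightarrow> M = K"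
    using finite_has_maximal2 by metis
  have "maximalideal M R"
  proof (rule maximalidealI)
    show "ideal M R" and "carrier R \<noteq> M" using M unfolding S_def by auto
    show "K = M \<or> K = carrier R" if "ideal K R" "M \<subseteq> K" "K \<subseteq> carrier R" for K
      using that M M_max[of K] unfolding S_def by auto
  qed
  then show ?thesis using M that unfolding S_def by blast
qed

locale finite_cring = cring +
  assumes finite_carrier: "finite (carrier R)" and one_not_zero: "\<one> \<noteq> \<zero>"
begin

lemma not_zero_divs_iff_Units: "a \<in> carrier R \<Longrightarrow> a \<notin> zero_divs R \<longleftrightarrow> a \<in> Units R"
  using not_zero_divs_imp_Units[OF finite_carrier] Units_not_zero_divs[OF one_not_zero] by blast

abbreviation J where "J \<equiv> jacobson R"

lemma ex_maximalideal: "\<exists>M. maximalideal M R"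
  using finite_ex_maximalideal_superset[OF finite_carrier zeroideal] one_not_zero by blast

lemma jacobson_eq_Inter: "J = \<Inter>{I. maximalideal I R}"
proof -
  have "\<Inter>{I. maximalideal I R} \<subseteq> carrier R"
    using ex_maximalideal by (auto dest: maximalideal.axioms(1) ideal.Icarr)
  then show ?thesis unfolding jacobson_def by blast
qed

lemma ideal_jacobson: "ideal J R"
  unfolding jacobson_eq_Inter
  by (rule i_Intersect) (use ex_maximalideal in \<open>auto intro: maximalideal.axioms(1)\<close>)

lemma one_notin_jacobson: "\<one> \<notin> J"
  using ex_maximalideal unfolding jacobson_eq_Inter
  by (auto dest: maximalideal.I_notcarr maximalideal.axioms(1) ideal.one_imp_carrier)

lemma one_add_jacobson_Units:
  assumes j: "j \<in> J"
  shows "\<one> \<oplus> j \<in> Units R"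
proof (rule ccontr)
  have jc: "j \<in> carrier R" using j unfolding jacobson_def by simp
  assume "\<one> \<oplus> j \<notin> Units R"
  then have "\<one> \<notin> PIdl (\<one> \<oplus> j)"
    using jc unfolding cgenideal_def by (auto simp: m_comm intro: UnitsI_r_inv)
  then have "PIdl (\<one> \<oplus> j) \<noteq> carrier R" by auto
  then obtain M where M: "maximalideal M R" and "PIdl (\<one> \<oplus> j) \<subseteq> M"
    using finite_ex_maximalideal_superset[OF finite_carrier cgenideal_ideal] jc by blast
  interpret M: maximalideal M R by (rule M)
  have "\<one> \<oplus> j \<in> M" using cgenideal_self jc \<open>PIdl (\<one> \<oplus> j) \<subseteq> M\<close> by blast
  moreover have "j \<in> M" using j M unfolding jacobson_eq_Inter by blast
  ultimately have "(\<one> \<oplus> j) \<ominus> j \<in> M" by (simp add: minus_eq M.a_closed M.a_inv_closed)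
  moreover have "(\<one> \<oplus> j) \<ominus> j = \<one>" using jc by algebra
  ultimately show False using M.one_imp_carrier M.I_notcarr by simp
qed

sublocale jacobson: ideal J R by (rule ideal_jacobson)

lemma carrier_quot_jacobson: "carrier (R Quot J) = (+>) J ` carrier R"
  unfolding FactRing_def A_RCOSETS_def' by auto

lemma coset_eq_iff:
  assumes "x \<in> carrier R" and "y \<in> carrier R"
  shows "J +> x = J +> y \<longleftrightarrow> x \<ominus> y \<in> J"
proof -
  have "J +> x = J +> y \<longleftrightarrow> x \<in> J +> y"
    using jacobson.a_repr_independence' jacobson.a_repr_independenceD assms by metis
  also have "\<dots> \<longleftrightarrow> x \<ominus> y \<in> J"
    by (rule jacobson.a_rcos_module_minus[OF ring_axioms assms(2,1)])
  finally show ?thesis .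
qed

lemma finite_cring_quot_jacobson: "finite_cring (R Quot J)"
proof -
  have "J +> \<one> \<noteq> J +> \<zero>"
    using coset_eq_iff one_notin_jacobson by (simp add: minus_eq)
  then have "\<one>\<^bsub>R Quot J\<^esub> \<noteq> \<zero>\<^bsub>R Quot J\<^esub>"
    by (simp add: FactRing_def jacobson.a_rcos_const)
  moreover have "finite (carrier (R Quot J))"
    using finite_carrier by (simp add: carrier_quot_jacobson)
  ultimately show ?thesis
    using jacobson.quotient_is_cring[OF is_cring] by (simp add: finite_cring_def finite_cring_axioms_def)
qed

lemma Units_quot_jacobson_iff:
  assumes x: "x \<in> carrier R"
  shows "J +> x \<in> Units (R Quot J) \<longleftrightarrow> x \<in> Units R"
proof
  assume "J +> x \<in> Units (R Quot J)"
  then obtain C where "C \<in> carrier (R Quot J)" and "(J +> x) \<otimes>\<^bsub>R Quot J\<^esub> C = \<one>\<^bsub>R Quot J\<^esub>"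
    unfolding Units_def by blast
  then obtain y where y: "y \<in> carrier R" and "(J +> x) \<otimes>\<^bsub>R Quot J\<^esub> (J +> y) = \<one>\<^bsub>R Quot J\<^esub>"
    unfolding carrier_quot_jacobson by blast
  then have "J +> (x \<otimes> y) = J +> \<one>"
    using x by (simp add: ring_hom_mult[OF jacobson.rcos_ring_hom] ring_hom_one[OF jacobson.rcos_ring_hom])
  then have "x \<otimes> y \<ominus> \<one> \<in> J" using coset_eq_iff[of "x \<otimes> y" \<one>] x y by simp
  then have "\<one> \<oplus> (x \<otimes> y \<ominus> \<one>) \<in> Units R" by (rule one_add_jacobson_Units)
  moreover have "\<one> \<oplus> (x \<otimes> y \<ominus> \<one>) = x \<otimes> y" using x y by algebra
  ultimately have xy: "x \<otimes> y \<in> Units R" by simp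
  then have "x \<otimes> (y \<otimes> inv (x \<otimes> y)) = \<one>" using x y by (simp add: m_assoc[symmetric])
  then show "x \<in> Units R" using x y xy by (intro UnitsI_r_inv) simp_all
next
  show "x \<in> Units R \<Longrightarrow> J +> x \<in> Units (R Quot J)"
    by (rule ring_hom_ring.hom_Units[OF jacobson.rcos_ring_hom_ring])
qed

lemma zero_divs_quot_jacobson_iff:
  assumes x: "x \<in> carrier R"
  shows "J +> x \<in> zero_divs (R Quot J) \<longleftrightarrow> x \<in> zero_divs R"
proof -
  interpret Q: finite_cring "R Quot J" by (rule finite_cring_quot_jacobson)
  have "J +> x \<in> carrier (R Quot J)" using x unfolding carrier_quot_jacobson by blast
  then have "J +> x \<notin> zero_divs (R Quot J) \<longleftrightarrow> J +> x \<in> Units (R Quot J)"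
    by (rule Q.not_zero_divs_iff_Units)
  also have "\<dots> \<longleftrightarrow> x \<notin> zero_divs R"
    using x Units_quot_jacobson_iff not_zero_divs_iff_Units by blast
  finally show ?thesis by blast
qed

lemma regular_elems_quot_jacobson: "regular_elems (R Quot J) = (+>) J ` regular_elems R"
  unfolding regular_elems_def carrier_quot_jacobson using zero_divs_quot_jacobson_iff by auto

lemma total_adj_quot_jacobson_iff:
  assumes "x \<in> carrier R" and "y \<in> carrier R"
  shows "total_adj (R Quot J) (J +> x) (J +> y) \<longleftrightarrow> J +> x \<noteq> J +> y \<and> x \<oplus> y \<in> zero_divs R"
  using assms zero_divs_quot_jacobson_iff[of "x \<oplus> y"]
  unfolding total_adj_def by (simp flip: ring_hom_add[OF jacobson.rcos_ring_hom])

lemma card_coset_fibre_le: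
  assumes "A \<subseteq> carrier R"
  shows "card {x \<in> A. J +> x = C} \<le> card J"
proof (cases "\<exists>x\<in>A. J +> x = C")
  case True
  then obtain x0 where x0: "x0 \<in> carrier R" "J +> x0 = C" using assms by blast
  have "{x \<in> A. J +> x = C} \<subseteq> J +> x0"
    using assms x0 jacobson.a_rcos_self by blast
  moreover have "finite (J +> x0)"
    using a_r_coset_subset_G[OF jacobson.a_subset x0(1)] finite_carrier by (rule finite_subset)
  moreover have "card (J +> x0) = card J"
    using a_rcosetsI[OF jacobson.a_subset x0(1)] jacobson.a_subset finite_carrier
    by (rule a_card_cosets_equal)
  ultimately show ?thesis by (metis card_mono)
next
  case False
  then have "{x \<in> A. J +> x = C} = {}" by blast
  then show ?thesis by (metis card.empty zero_le)
qed

lemma add_not_zero_divs_if_same_coset: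
  assumes two: "\<one> \<oplus> \<one> \<notin> zero_divs R"
    and x: "x \<in> regular_elems R" and y: "y \<in> regular_elems R" and "J +> x = J +> y"
  shows "x \<oplus> y \<notin> zero_divs R"
proof -
  have xc: "x \<in> carrier R" and yc: "y \<in> carrier R" using x y unfolding regular_elems_def by auto
  have "(\<one> \<oplus> \<one>) \<otimes> x \<in> Units R"
    using two x xc not_zero_divs_iff_Units unfolding regular_elems_def by auto
  then have unit: "(\<one> \<oplus> \<one>) \<otimes> x \<notin> zero_divs R"
    using xc not_zero_divs_iff_Units by simp
  have "y \<ominus> x \<in> J" using coset_eq_iff xc yc \<open>J +> x = J +> y\<close> by blast
  moreover have "(x \<oplus> y) \<ominus> (\<one> \<oplus> \<one>) \<otimes> x = y \<ominus> x" using xc yc by algebra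
  ultimately have "J +> (x \<oplus> y) = J +> ((\<one> \<oplus> \<one>) \<otimes> x)"
    using xc yc coset_eq_iff by simp
  then show ?thesis
    using unit xc yc zero_divs_quot_jacobson_iff by (metis add.m_closed m_closed one_closed)
qed

lemma finite_regular_elems: "finite (regular_elems R)"
  using finite_carrier unfolding regular_elems_def by simp

lemma chi_reg_le_card_jacobson_mult: "chi_reg R \<le> card J * chi_reg (R Quot J)"
  unfolding chi_reg_def
proof (rule chromatic_number_le_mult_fibre_card[where f = "(+>) J"])
  show "finite (regular_elems (R Quot J))"
    using finite_regular_elems by (simp add: regular_elems_quot_jacobson)
  show "(+>) J ` regular_elems R \<subseteq> regular_elems (R Quot J)"
    by (simp add: regular_elems_quot_jacobson)
  show "card {x \<in> regular_elems R. J +> x = C} \<le> card J" for C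
    by (rule card_coset_fibre_le) (auto simp: regular_elems_def)
  show "total_adj (R Quot J) (J +> x) (J +> y)"
    if "x \<in> regular_elems R" "y \<in> regular_elems R" "total_adj R x y" "J +> x \<noteq> J +> y" for x y
    using that total_adj_quot_jacobson_iff unfolding total_adj_def regular_elems_def by auto
qed (auto simp: finite_regular_elems total_adj_def)

lemma chi_reg_quot_jacobson_le: "chi_reg (R Quot J) \<le> chi_reg R"
  unfolding chi_reg_def
proof (rule chromatic_number_le_of_lift[where f = "(+>) J"])
  show "total_adj R x y"
    if "x \<in> regular_elems R" "y \<in> regular_elems R" "total_adj (R Quot J) (J +> x) (J +> y)" for x y
    using that total_adj_quot_jacobson_iff unfolding total_adj_def regular_elems_def by auto
qed (auto simp: finite_regular_elems total_adj_def regular_elems_quot_jacobson)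

lemma chi_reg_le_quot_jacobson:
  assumes "\<one> \<oplus> \<one> \<notin> zero_divs R"
  shows "chi_reg R \<le> chi_reg (R Quot J)"
  unfolding chi_reg_def
proof (rule chromatic_number_le_hom[where f = "(+>) J"])
  show "finite (regular_elems (R Quot J))"
    using finite_regular_elems by (simp add: regular_elems_quot_jacobson)
  show "(+>) J ` regular_elems R \<subseteq> regular_elems (R Quot J)"
    by (simp add: regular_elems_quot_jacobson)
  show "total_adj (R Quot J) (J +> x) (J +> y)"
    if "x \<in> regular_elems R" "y \<in> regular_elems R" "total_adj R x y" for x y
    using that assms add_not_zero_divs_if_same_coset total_adj_quot_jacobson_iff
    unfolding total_adj_def regular_elems_def by auto
qed (simp add: total_adj_def)

end

theorem lemma17:
  fixes R :: "('a, 'b) ring_scheme"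
  assumes "cring R" and "finite (carrier R)"
  shows "chi_reg R \<le> card (jacobson R) * chi_reg (R Quot (jacobson R)) \<and>
         (\<one>\<^bsub>R\<^esub> \<oplus>\<^bsub>R\<^esub> \<one>\<^bsub>R\<^esub> \<notin> zero_divs R \<longrightarrow>
          chi_reg R = chi_reg (R Quot (jacobson R)))"
proof (cases "\<one>\<^bsub>R\<^esub> = \<zero>\<^bsub>R\<^esub>")
  case True
  interpret cring R by fact
  have "carrier R = {\<zero>\<^bsub>R\<^esub>}" using True by (rule one_zeroD)
  then have "regular_elems R = {}" and "\<one>\<^bsub>R\<^esub> \<oplus>\<^bsub>R\<^esub> \<one>\<^bsub>R\<^esub> \<in> zero_divs R"
    unfolding regular_elems_def zero_divs_def by auto
  moreover have "chromatic_number {} E = 0" for E :: "'a \<Rightarrow> 'a \<Rightarrow> bool"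
    using chromatic_number_le[of "{}" _ 0] by simp
  ultimately show ?thesis unfolding chi_reg_def by simp
next
  case False
  interpret finite_cring R
    using assms False by (simp add: finite_cring_def finite_cring_axioms_def cring.axioms)
  show ?thesis
    using chi_reg_le_card_jacobson_mult chi_reg_quot_jacobson_le chi_reg_le_quot_jacobson
    by (simp add: le_antisym)
qed

end
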